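(* Let $t\ge1$ and $k\ge1$ be integers. If a connected graph $G$ admits a (multiplicative) $t$-spanner with tree-width $k-1$, then $\mathrm{tb}_k(G)\leq\lceil t/2\rceil$.
   Context: Graphs are finite, connected, unweighted, undirected and simple; $d_G$ is the shortest-path distance and $D_r(v,G)=\{u: d_G(u,v)\le r\}$. A spanning subgraph $H$ of $G$ is a (multiplicative) $t$-spanner if $d_H(u,v)\le t\cdot d_G(u,v)$ for all $u,v$. A tree-decomposition of $G=(V,E)$ is a pair $(\{X_i\mid i\in I\},T=(I,F))$ with $T$ a tree and bags $X_i\subseteq V$ such that (1) $\bigcup_i X_i=V$; (2) every edge lies in some bag; (3) for each $v\in V$ the nodes containing $v$ induce a connected subtree of $T$. Its width is $\max_i|X_i|-1$ and tree-width is the minimum width. Its $k$-breadth is the minimum integer $r$ such that every bag $X_i$ is contained in $D_r(v^i_1,G)\cup\dots\cup D_r(v^i_k,G)$ for some vertices $v^i_1,\dots,v^i_k$ of $G$; $\mathrm{tb}_k(G)$ is the minimum $k$-breadth over all tree-decompositions of $G$. *)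

theory Defs
  imports Complex_Main "HOL-Library.Extended_Nat"
begin

definition graph :: "'a set \<Rightarrow> 'a set set \<Rightarrow> bool" where
  "graph V E \<longleftrightarrow> finite V \<and> (\<forall>e\<in>E. card e = 2 \<and> e \<subseteq> V)"

definition walk :: "'a set \<Rightarrow> 'a set set \<Rightarrow> 'a list \<Rightarrow> bool" where
  "walk V E xs \<longleftrightarrow> xs \<noteq> [] \<and> set xs \<subseteq> V \<and>
     (\<forall>i. Suc i < length xs \<longrightarrow> {xs ! i, xs ! Suc i} \<in> E)"

definition connected_graph :: "'a set \<Rightarrow> 'a set set \<Rightarrow> bool" where
  "connected_graph V E \<longleftrightarrow>
     (\<forall>u\<in>V. \<forall>v\<in>V. \<exists>xs. walk V E xs \<and> hd xs = u \<and> last xs = v)"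

definition gdist :: "'a set \<Rightarrow> 'a set set \<Rightarrow> 'a \<Rightarrow> 'a \<Rightarrow> enat" where
  "gdist V E u v = Inf {enat (length xs - 1) | xs. walk V E xs \<and> hd xs = u \<and> last xs = v}"

definition disk :: "'a set \<Rightarrow> 'a set set \<Rightarrow> nat \<Rightarrow> 'a \<Rightarrow> 'a set" where
  "disk V E r v = {u\<in>V. gdist V E u v \<le> enat r}"

definition tree :: "'b set \<Rightarrow> 'b set set \<Rightarrow> bool" where
  "tree I F \<longleftrightarrow> graph I F \<and> I \<noteq> {} \<and> connected_graph I F \<and> card F = card I - 1"

definition tree_decomp :: "'a set \<Rightarrow> 'a set set \<Rightarrow> 'b set \<Rightarrow> 'b set set \<Rightarrow> ('b \<Rightarrow> 'a set) \<Rightarrow> bool" where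
  "tree_decomp V E I F X \<longleftrightarrow> tree I F \<and> (\<forall>i\<in>I. X i \<subseteq> V) \<and>
     (\<Union>i\<in>I. X i) = V \<and>
     (\<forall>e\<in>E. \<exists>i\<in>I. e \<subseteq> X i) \<and>
     (\<forall>v\<in>V. connected_graph {i\<in>I. v \<in> X i} {f\<in>F. f \<subseteq> {i\<in>I. v \<in> X i}})"

definition td_width :: "'b set \<Rightarrow> ('b \<Rightarrow> 'a set) \<Rightarrow> nat" where
  "td_width I X = Max ((\<lambda>i. card (X i)) ` I) - 1"

text \<open>Tree-width: minimum width over all tree-decompositions (indices taken in nat,
  which is no loss of generality for finite trees).\<close>
definition treewidth :: "'a set \<Rightarrow> 'a set set \<Rightarrow> nat" where
  "treewidth V E = (LEAST w. \<exists>(I::nat set) F X. tree_decomp V E I F X \<and> td_width I X = w)"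

definition breadth_le :: "'a set \<Rightarrow> 'a set set \<Rightarrow> nat \<Rightarrow> 'b set \<Rightarrow> ('b \<Rightarrow> 'a set) \<Rightarrow> nat \<Rightarrow> bool" where
  "breadth_le V E k I X r \<longleftrightarrow>
     (\<forall>i\<in>I. \<exists>c::nat \<Rightarrow> 'a. (\<forall>j<k. c j \<in> V) \<and> X i \<subseteq> (\<Union>j<k. disk V E r (c j)))"

definition tb :: "nat \<Rightarrow> 'a set \<Rightarrow> 'a set set \<Rightarrow> nat" where
  "tb k V E = (LEAST r. \<exists>(I::nat set) F X. tree_decomp V E I F X \<and> breadth_le V E k I X r)"

definition spanner :: "'a set \<Rightarrow> 'a set set \<Rightarrow> 'a set set \<Rightarrow> nat \<Rightarrow> bool" where
  "spanner V E F t \<longleftrightarrow> F \<subseteq> E \<and>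
     (\<forall>u\<in>V. \<forall>v\<in>V. gdist V F u v \<le> enat t * gdist V E u v)"

end

theory Submission
  imports Defs
begin

text \<open>
  Let \<open>H\<close> be a \<open>t\<close>-spanner of \<open>G\<close> and \<open>(T, X)\<close> a tree-decomposition of \<open>H\<close>
  whose bags have at most \<open>k\<close> vertices, and put \<open>r = \<lceil>t/2\<rceil>\<close>. Replace every bag
  \<open>X\<^sub>i\<close> by \<open>\<Union>x\<in>X\<^sub>i. D\<^sub>r(x, H)\<close>. Every edge \<open>uv\<close> of \<open>G\<close> has \<open>d\<^sub>H(u, v) \<le> t \<le> 2r\<close>,
  so both ends lie within distance \<open>r\<close> of a midpoint of a shortest \<open>u\<close>-\<open>v\<close> path
  in \<open>H\<close>, i.e. in a common new bag. The new bags containing a vertex \<open>v\<close> are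
  those meeting \<open>D\<^sub>r(v, H)\<close>; this is a union of subtrees along shortest paths
  from \<open>v\<close>, consecutive ones intersecting, hence again a subtree. Since
  \<open>d\<^sub>G \<le> d\<^sub>H\<close>, each new bag is covered by \<open>k\<close> disks of radius \<open>r\<close> in \<open>G\<close>.
\<close>

section \<open>Walks and reachability\<close>

lemma walk_Nil [simp]: "\<not> walk V E []"
  by (simp add: walk_def)

lemma walk_Cons:
  "walk V E (x # xs) \<longleftrightarrow> x \<in> V \<and> (xs = [] \<or> {x, hd xs} \<in> E \<and> walk V E xs)"
proof (cases xs)
  case Nil
  then show ?thesis by (simp add: walk_def)
next
  case (Cons y ys)
  have "(\<forall>i. Suc i < length (x # xs) \<longrightarrow> {(x # xs) ! i, (x # xs) ! Suc i} \<in> E) \<longleftrightarrow>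
        {x, y} \<in> E \<and> (\<forall>i. Suc i < length xs \<longrightarrow> {xs ! i, xs ! Suc i} \<in> E)"
    using Cons by (auto simp: All_less_Suc2 less_Suc_eq_0_disj)
  then show ?thesis
    using Cons by (auto simp: walk_def)
qed

lemma walk_set_subset: "walk V E xs \<Longrightarrow> set xs \<subseteq> V"
  by (simp add: walk_def)

lemma walk_append:
  "walk V E xs \<Longrightarrow> walk V E ys \<Longrightarrow> last xs = hd ys \<Longrightarrow> walk V E (xs @ tl ys)"
proof (induction xs)
  case Nil
  then show ?case by simp
next
  case (Cons x xs)
  show ?case
  proof (cases "xs = []")
    case True
    with Cons.prems show ?thesis by (cases ys) simp_all
  next
    case False
    with Cons show ?thesis by (auto simp: walk_Cons)
  qed
qed

lemma walk_rev: "walk V E xs \<Longrightarrow> walk V E (rev xs)"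
proof (induction xs)
  case Nil
  then show ?case by simp
next
  case (Cons x xs)
  show ?case
  proof (cases "xs = []")
    case True
    with Cons.prems show ?thesis by simp
  next
    case False
    with Cons.prems have xs: "walk V E xs" and "{x, hd xs} \<in> E" and "x \<in> V"
      by (simp_all add: walk_Cons)
    moreover have "hd xs \<in> V"
      using walk_set_subset[OF xs] False by auto
    ultimately have "walk V E [hd xs, x]"
      by (simp add: walk_Cons insert_commute)
    from walk_append[OF Cons.IH[OF xs] this] False show ?thesis
      by (simp add: last_rev)
  qed
qed

lemma walk_take: "walk V E xs \<Longrightarrow> 0 < n \<Longrightarrow> walk V E (take n xs)"
  unfolding walk_def by (auto dest: in_set_takeD)

lemma walk_drop: "walk V E xs \<Longrightarrow> i < length xs \<Longrightarrow> walk V E (drop i xs)"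
  unfolding walk_def by (auto dest: in_set_dropD simp: add.commute)

definition reach :: "'a set \<Rightarrow> 'a set set \<Rightarrow> 'a \<Rightarrow> 'a \<Rightarrow> bool" where
  "reach V E u v \<longleftrightarrow> (\<exists>xs. walk V E xs \<and> hd xs = u \<and> last xs = v)"

lemma connected_graph_iff_reach: "connected_graph V E \<longleftrightarrow> (\<forall>u\<in>V. \<forall>v\<in>V. reach V E u v)"
  by (simp add: connected_graph_def reach_def)

lemma reach_refl: "u \<in> V \<Longrightarrow> reach V E u u"
  unfolding reach_def by (rule exI[of _ "[u]"]) (simp add: walk_def)

lemma reach_sym: "reach V E u v \<Longrightarrow> reach V E v u"
  unfolding reach_def by (metis walk_rev hd_rev last_rev)

lemma reach_trans: "reach V E u v \<Longrightarrow> reach V E v w \<Longrightarrow> reach V E u w"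
proof -
  assume "reach V E u v" "reach V E v w"
  then obtain xs ys where xs: "walk V E xs" "hd xs = u" "last xs = v"
    and ys: "walk V E ys" "hd ys = v" "last ys = w"
    unfolding reach_def by blast
  have "xs \<noteq> []"
    using xs by auto
  with xs have "hd (xs @ tl ys) = u"
    by simp
  moreover have "last (xs @ tl ys) = w"
    using xs ys by (cases ys) (auto simp: last_append)
  ultimately show ?thesis
    using walk_append[OF xs(1) ys(1)] xs ys unfolding reach_def by metis
qed

lemma reach_mono: "reach V E u v \<Longrightarrow> V \<subseteq> V' \<Longrightarrow> E \<subseteq> E' \<Longrightarrow> reach V' E' u v"
  unfolding reach_def walk_def by blast

section \<open>Shortest-path distance\<close>

lemma gdist_le_enat_iff:
  "gdist V E u v \<le> enat n \<longleftrightarrow>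
     (\<exists>xs. walk V E xs \<and> hd xs = u \<and> last xs = v \<and> length xs - 1 \<le> n)"
proof
  define S where "S = {enat (length xs - 1) | xs. walk V E xs \<and> hd xs = u \<and> last xs = v}"
  assume le: "gdist V E u v \<le> enat n"
  have gd: "gdist V E u v = Inf S"
    by (simp add: gdist_def S_def)
  with le have "S \<noteq> {}"
    by (auto simp: Inf_enat_def)
  then have "Inf S \<in> S"
    unfolding Inf_enat_def by (auto intro: LeastI)
  then obtain xs where "walk V E xs" "hd xs = u" "last xs = v" "gdist V E u v = enat (length xs - 1)"
    unfolding gd S_def by blast
  with le show "\<exists>xs. walk V E xs \<and> hd xs = u \<and> last xs = v \<and> length xs - 1 \<le> n"
    by auto
next
  assume "\<exists>xs. walk V E xs \<and> hd xs = u \<and> last xs = v \<and> length xs - 1 \<le> n"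
  then obtain xs where xs: "walk V E xs" "hd xs = u" "last xs = v" "length xs - 1 \<le> n"
    by blast
  then have "gdist V E u v \<le> enat (length xs - 1)"
    unfolding gdist_def by (intro Inf_lower) blast
  with xs(4) show "gdist V E u v \<le> enat n"
    by (simp add: order_trans)
qed

lemma gdist_le_sym: "gdist V E u v \<le> enat n \<Longrightarrow> gdist V E v u \<le> enat n"
  unfolding gdist_le_enat_iff by (metis walk_rev hd_rev last_rev length_rev)

lemma gdist_le_mono: "F \<subseteq> E \<Longrightarrow> gdist V F u v \<le> enat n \<Longrightarrow> gdist V E u v \<le> enat n"
  unfolding gdist_le_enat_iff walk_def by blast

lemma gdist_self_le: "u \<in> V \<Longrightarrow> gdist V E u u \<le> enat n"
  unfolding gdist_le_enat_iff by (rule exI[of _ "[u]"]) (simp add: walk_def)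

lemma gdist_le_edge: "{u, v} \<in> E \<Longrightarrow> u \<in> V \<Longrightarrow> v \<in> V \<Longrightarrow> gdist V E u v \<le> enat 1"
  unfolding gdist_le_enat_iff by (rule exI[of _ "[u, v]"]) (simp add: walk_Cons)

lemma gdist_hd_nth_le: "walk V E xs \<Longrightarrow> l < length xs \<Longrightarrow> gdist V E (hd xs) (xs ! l) \<le> enat l"
proof -
  assume xs: "walk V E xs" "l < length xs"
  then have "walk V E (take (Suc l) xs)" "hd (take (Suc l) xs) = hd xs"
    by (auto simp: walk_take)
  moreover have "last (take (Suc l) xs) = xs ! l"
    using xs by (simp add: take_Suc_conv_app_nth)
  ultimately show ?thesis
    unfolding gdist_le_enat_iff by (intro exI[of _ "take (Suc l) xs"]) simp
qed

lemma gdist_nth_last_le: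
  "walk V E xs \<Longrightarrow> l < length xs \<Longrightarrow> gdist V E (xs ! l) (last xs) \<le> enat (length xs - 1 - l)"
  unfolding gdist_le_enat_iff
  by (rule exI[of _ "drop l xs"]) (auto simp: walk_drop hd_drop_conv_nth)

lemma gdist_midpoint:
  assumes "gdist V E u v \<le> enat (a + b)"
  obtains m where "m \<in> V" "gdist V E u m \<le> enat a" "gdist V E m v \<le> enat b"
proof -
  obtain xs where xs: "walk V E xs" "hd xs = u" "last xs = v" "length xs - 1 \<le> a + b"
    using assms unfolding gdist_le_enat_iff by blast
  define l where "l = min a (length xs - 1)"
  have l: "l < length xs"
    using xs(1) by (cases xs) (auto simp: l_def)
  show thesis
  proof
    show "xs ! l \<in> V"
      using walk_set_subset[OF xs(1)] l by auto
    have "enat l \<le> enat a"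
      by (simp add: l_def)
    with gdist_hd_nth_le[OF xs(1) l] xs(2) show "gdist V E u (xs ! l) \<le> enat a"
      by (metis order_trans)
    have "enat (length xs - 1 - l) \<le> enat b"
      using xs(4) by (simp add: l_def)
    with gdist_nth_last_le[OF xs(1) l] xs(3) show "gdist V E (xs ! l) v \<le> enat b"
      by (metis order_trans)
  qed
qed

lemma disk_mono: "F \<subseteq> E \<Longrightarrow> disk V F r x \<subseteq> disk V E r x"
  unfolding disk_def using gdist_le_mono[of F E V] by blast

lemma spanner_edge_gdist_le:
  assumes "spanner V E H t" "{u, v} \<in> E" "u \<in> V" "v \<in> V"
  shows "gdist V H u v \<le> enat t"
proof -
  have "gdist V H u v \<le> enat t * gdist V E u v"
    using assms unfolding spanner_def by blast
  also have "\<dots> \<le> enat t * enat 1"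
    using gdist_le_edge[OF assms(2-4)] by (rule mult_left_mono) simp
  finally show ?thesis by simp
qed

section \<open>Tree-decompositions\<close>

lemma treewidth_attained:
  assumes "graph V E"
  shows "\<exists>(I::nat set) F X. tree_decomp V E I F X \<and> td_width I X = treewidth V E"
proof -
  have "tree {0::nat} {}"
    unfolding tree_def graph_def connected_graph_iff_reach by (auto intro: reach_refl)
  with assms have "tree_decomp V E {0::nat} {} (\<lambda>_. V)"
    unfolding tree_decomp_def graph_def by (auto simp: connected_graph_iff_reach intro: reach_refl)
  then have "\<exists>w (I::nat set) F X. tree_decomp V E I F X \<and> td_width I X = w"
    by blast
  then show ?thesis
    unfolding treewidth_def by (rule LeastI_ex)
qed

lemma tree_decomp_card_bag_le:
  "tree_decomp V E I F X \<Longrightarrow> i \<in> I \<Longrightarrow> card (X i) \<le> Suc (td_width I X)"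
proof -
  assume "tree_decomp V E I F X" "i \<in> I"
  then have "card (X i) \<le> Max ((\<lambda>i. card (X i)) ` I)"
    by (simp add: tree_decomp_def tree_def graph_def)
  then show ?thesis
    by (simp add: td_width_def)
qed

lemma tree_decomp_walk_reach:
  assumes td: "tree_decomp V H I F X" and ws: "walk V H ws"
    and S: "\<And>b. b \<in> set ws \<Longrightarrow> {i\<in>I. b \<in> X i} \<subseteq> S"
    and i: "i \<in> I" "hd ws \<in> X i" and j: "j \<in> I" "last ws \<in> X j"
  shows "reach S {f\<in>F. f \<subseteq> S} i j"
  using ws S i j(2)
proof (induction ws arbitrary: i)
  case Nil
  then show ?case by simp
next
  case (Cons x xs)
  have reach_in_subtree: "reach S {f\<in>F. f \<subseteq> S} i' j'"
    if "i' \<in> I" "x \<in> X i'" "j' \<in> I" "x \<in> X j'" for i' j'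
  proof -
    have "x \<in> V"
      using Cons.prems(1) by (simp add: walk_Cons)
    with td that have "reach {i\<in>I. x \<in> X i} {f\<in>F. f \<subseteq> {i\<in>I. x \<in> X i}} i' j'"
      unfolding tree_decomp_def connected_graph_iff_reach by blast
    then show ?thesis
      by (rule reach_mono) (use Cons.prems(2) in auto)
  qed
  show ?case
  proof (cases "xs = []")
    case True
    with Cons.prems j(1) show ?thesis
      by (intro reach_in_subtree) auto
  next
    case False
    with Cons.prems(1) have "{x, hd xs} \<in> H" "walk V H xs"
      by (simp_all add: walk_Cons)
    then obtain i1 where i1: "i1 \<in> I" "{x, hd xs} \<subseteq> X i1"
      using td unfolding tree_decomp_def by blast
    have "reach S {f\<in>F. f \<subseteq> S} i i1"
      using Cons.prems(3,4) i1 by (intro reach_in_subtree) auto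
    moreover have "reach S {f\<in>F. f \<subseteq> S} i1 j"
      using Cons.IH[OF \<open>walk V H xs\<close> _ i1(1)] Cons.prems(2,5) i1(2) False by auto
    ultimately show ?thesis
      by (rule reach_trans)
  qed
qed

lemma tree_decomp_disk_expansion:
  assumes td: "tree_decomp V H I F X" and G: "graph V E"
    and stretch: "\<And>u v. {u, v} \<in> E \<Longrightarrow> gdist V H u v \<le> enat (2 * r)"
  shows "tree_decomp V E I F (\<lambda>i. \<Union>x\<in>X i. disk V H r x)"
proof -
  let ?X' = "\<lambda>i. \<Union>x\<in>X i. disk V H r x"
  have cover: "(\<Union>i\<in>I. X i) = V"
    using td by (simp add: tree_decomp_def)
  have bags': "\<forall>i\<in>I. ?X' i \<subseteq> V"
    by (auto simp: disk_def)
  have "V \<subseteq> (\<Union>i\<in>I. ?X' i)"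
  proof
    fix v assume "v \<in> V"
    then obtain i where "i \<in> I" "v \<in> X i"
      using cover by blast
    moreover have "v \<in> disk V H r v"
      using \<open>v \<in> V\<close> by (simp add: disk_def gdist_self_le)
    ultimately show "v \<in> (\<Union>i\<in>I. ?X' i)"
      by blast
  qed
  with bags' have cover': "(\<Union>i\<in>I. ?X' i) = V"
    by blast
  have edges': "\<forall>e\<in>E. \<exists>i\<in>I. e \<subseteq> ?X' i"
  proof
    fix e assume e: "e \<in> E"
    have "card e = 2" "e \<subseteq> V"
      using G e by (simp_all add: graph_def)
    then obtain u v where uv: "e = {u, v}" "u \<in> V" "v \<in> V"
      by (metis card_2_iff insert_subset)
    have "gdist V H u v \<le> enat (r + r)"
      using stretch e uv by (simp add: mult_2)
    then obtain m where m: "m \<in> V" "gdist V H u m \<le> enat r" "gdist V H m v \<le> enat r"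
      by (rule gdist_midpoint)
    obtain j where j: "j \<in> I" "m \<in> X j"
      using cover m(1) by blast
    have "u \<in> disk V H r m" "v \<in> disk V H r m"
      using m uv gdist_le_sym[OF m(3)] by (simp_all add: disk_def)
    with j(2) uv have "e \<subseteq> ?X' j"
      by blast
    with j(1) show "\<exists>i\<in>I. e \<subseteq> ?X' i" ..
  qed
  have subtrees': "\<forall>v\<in>V. connected_graph {i\<in>I. v \<in> ?X' i} {f\<in>F. f \<subseteq> {i\<in>I. v \<in> ?X' i}}"
  proof
    fix v assume v: "v \<in> V"
    define S where "S = {i\<in>I. v \<in> ?X' i}"
    obtain i0 where i0: "i0 \<in> I" "v \<in> X i0"
      using cover v by blast
    have from_i0: "reach S {f\<in>F. f \<subseteq> S} i0 j" if "j \<in> S" for j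
    proof -
      obtain x where x: "j \<in> I" "x \<in> X j" "gdist V H v x \<le> enat r"
        using \<open>j \<in> S\<close> by (auto simp: S_def disk_def)
      then obtain ws where ws: "walk V H ws" "hd ws = v" "last ws = x" "length ws - 1 \<le> r"
        unfolding gdist_le_enat_iff by blast
      have "{i\<in>I. b \<in> X i} \<subseteq> S" if "b \<in> set ws" for b
      proof -
        obtain l where l: "l < length ws" "b = ws ! l"
          using \<open>b \<in> set ws\<close> by (auto simp: in_set_conv_nth)
        have "gdist V H v b \<le> enat l"
          using gdist_hd_nth_le[OF ws(1) l(1)] ws(2) l(2) by simp
        also have "enat l \<le> enat r"
          using l(1) ws(4) by simp
        finally have "v \<in> disk V H r b"
          using v by (simp add: disk_def)
        then show ?thesis
          by (auto simp: S_def)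
      qed
      then show ?thesis
        using tree_decomp_walk_reach[OF td ws(1) _ i0(1) _ x(1)] i0(2) x(2) ws(2,3) by blast
    qed
    have "reach S {f\<in>F. f \<subseteq> S} j j'" if "j \<in> S" "j' \<in> S" for j j'
      using reach_trans[OF reach_sym[OF from_i0[OF that(1)]] from_i0[OF that(2)]] .
    then show "connected_graph S {f\<in>F. f \<subseteq> S}"
      by (simp add: connected_graph_iff_reach)
  qed
  have "tree I F"
    using td by (simp add: tree_decomp_def)
  with bags' cover' edges' subtrees' show ?thesis
    unfolding tree_decomp_def by (intro conjI)
qed

lemma breadth_le_disk_expansion:
  assumes "V \<noteq> {}" and bags: "\<And>i. i \<in> I \<Longrightarrow> finite (X i) \<and> X i \<subseteq> V \<and> card (X i) \<le> k"
  shows "breadth_le V E k I (\<lambda>i. \<Union>x\<in>X i. disk V E r x) r"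
  unfolding breadth_le_def
proof
  fix i assume "i \<in> I"
  then obtain xs where xs: "set xs = X i" "length xs \<le> k" "set xs \<subseteq> V"
    using bags finite_distinct_list by (metis distinct_card)
  obtain v0 where "v0 \<in> V"
    using assms(1) by blast
  define c where "c j = (if j < length xs then xs ! j else v0)" for j
  have "\<forall>j<k. c j \<in> V"
    using xs(3) \<open>v0 \<in> V\<close> by (auto simp: c_def)
  moreover have "(\<Union>x\<in>X i. disk V E r x) \<subseteq> (\<Union>j<k. disk V E r (c j))"
  proof
    fix u assume "u \<in> (\<Union>x\<in>X i. disk V E r x)"
    then obtain x where "x \<in> set xs" "u \<in> disk V E r x"
      using xs(1) by blast
    then obtain j where "j < length xs" "u \<in> disk V E r (xs ! j)"
      by (metis in_set_conv_nth)
    with xs(2) show "u \<in> (\<Union>j<k. disk V E r (c j))"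
      by (auto simp: c_def intro!: bexI[of _ j])
  qed
  ultimately show "\<exists>c. (\<forall>j<k. c j \<in> V) \<and> (\<Union>x\<in>X i. disk V E r x) \<subseteq> (\<Union>j<k. disk V E r (c j))"
    by blast
qed

lemma breadth_le_subset:
  "breadth_le V E k I Y r \<Longrightarrow> (\<And>i. i \<in> I \<Longrightarrow> X i \<subseteq> Y i) \<Longrightarrow> breadth_le V E k I X r"
  unfolding breadth_le_def by (meson order_trans)

theorem lemma15:
  fixes V :: "'a set" and E :: "'a set set" and t k :: nat
  assumes "graph V E" and "V \<noteq> {}" and "connected_graph V E"
    and "t \<ge> 1" and "k \<ge> 1"
    and "\<exists>F. spanner V E F t \<and> treewidth V F = k - 1"
  shows "int (tb k V E) \<le> \<lceil>real t / 2\<rceil>"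
proof -
  obtain H where sp: "spanner V E H t" and tw: "treewidth V H = k - 1"
    using assms(6) by blast
  have "H \<subseteq> E"
    using sp by (simp add: spanner_def)
  with assms(1) have "graph V H"
    by (auto simp: graph_def)
  then obtain I :: "nat set" and F X where td: "tree_decomp V H I F X" and "td_width I X = k - 1"
    using treewidth_attained tw by metis
  with assms(5) have bags: "finite (X i) \<and> X i \<subseteq> V \<and> card (X i) \<le> k" if "i \<in> I" for i
    using tree_decomp_card_bag_le[OF td that] assms(1) that
    by (auto simp: tree_decomp_def graph_def intro: finite_subset)
  define r where "r = (t + 1) div 2"
  have "tree_decomp V E I F (\<lambda>i. \<Union>x\<in>X i. disk V H r x)"
  proof (rule tree_decomp_disk_expansion[OF td assms(1)])
    fix u v assume "{u, v} \<in> E"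
    with assms(1) sp have "gdist V H u v \<le> enat t"
      by (intro spanner_edge_gdist_le) (auto simp: graph_def)
    also have "enat t \<le> enat (2 * r)"
      by (simp add: r_def)
    finally show "gdist V H u v \<le> enat (2 * r)" .
  qed
  moreover have "breadth_le V E k I (\<lambda>i. \<Union>x\<in>X i. disk V H r x) r"
  proof (rule breadth_le_subset)
    show "breadth_le V E k I (\<lambda>i. \<Union>x\<in>X i. disk V E r x) r"
      using assms(2) bags by (rule breadth_le_disk_expansion)
    show "(\<Union>x\<in>X i. disk V H r x) \<subseteq> (\<Union>x\<in>X i. disk V E r x)" for i
      using disk_mono[OF \<open>H \<subseteq> E\<close>] by blast
  qed
  ultimately have "tb k V E \<le> r"
    unfolding tb_def by (intro Least_le) blast
  then show ?thesis
    by (simp add: r_def le_ceiling_iff)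
qed

end
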